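(* Let $s\in\{0,1\}$, $s'=1-s$, let $\mathbf{T}_s$ be any transport map from $\mathcal{P}_s$ to $\mathcal{P}_{s'}$, let $\delta\ge0$, and let $f:\mathcal{X}\times\{0,1\}\to[0,1]$ be a measurable model. If $\Delta\mathrm{MDP}(f,\mathbf{T}_s)\le\delta$, then $\Delta\mathrm{WDP}(f)\le\delta$ and $\Delta\overline{\mathrm{DP}}(f)\le\delta$.
   Context: Setting: $(\mathbf{X},Y,S)$ is a random tuple with $\mathbf{X}\in\mathcal{X}\subset\mathbb{R}^d$ and binary sensitive attribute $S\in\{0,1\}$; $\mathcal{P}_s$ is the conditional distribution of $\mathbf{X}$ given $S=s$ (assumed absolutely continuous w.r.t. Lebesgue measure), $\mathbb{E}_s$ its expectation. A transport map from $\mathcal{P}_s$ to $\mathcal{P}_{s'}$ is a map $\mathbf{T}$ with $\mathbf{T}_{\#}\mathcal{P}_s=\mathcal{P}_{s'}$. $\mathcal{P}_{f_s}$ is the distribution of $f(\mathbf{X},s)$ with $\mathbf{X}\sim\mathcal{P}_s$. Definitions: $\Delta\mathrm{MDP}(f,\mathbf{T}_s):=\mathbb{E}_s|f(\mathbf{X},s)-f(\mathbf{T}_s(\mathbf{X}),s')|$; $\Delta\mathrm{WDP}(f):=\mathcal{W}(\mathcal{P}_{f_0},\mathcal{P}_{f_1})$ where $\mathcal{W}$ is the 1-Wasserstein distance $\mathcal{W}(\mathcal{Q}_1,\mathcal{Q}_2)=\inf_{\gamma}\mathbb{E}_{(x,y)\sim\gamma}|x-y|$ over couplings $\gamma$ of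 $\mathcal{Q}_1,\mathcal{Q}_2$; $\Delta\overline{\mathrm{DP}}(f):=|\mathbb{E}(f(\mathbf{X},0)\mid S=0)-\mathbb{E}(f(\mathbf{X},1)\mid S=1)|$. *)

theory Defs
  imports "HOL-Probability.Probability"
begin

definition couplings :: "real measure \<Rightarrow> real measure \<Rightarrow> (real \<times> real) measure set" where
  "couplings Q1 Q2 = {\<gamma>. sets \<gamma> = sets borel \<and> prob_space \<gamma> \<and>
      distr \<gamma> borel fst = Q1 \<and> distr \<gamma> borel snd = Q2}"

definition wasserstein1 :: "real measure \<Rightarrow> real measure \<Rightarrow> ennreal" where
  "wasserstein1 Q1 Q2 = (INF \<gamma>\<in>couplings Q1 Q2. \<integral>\<^sup>+ z. ennreal \<bar>fst z - snd z\<bar> \<partial>\<gamma>)"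

definition model_distr :: "(nat \<Rightarrow> 'a measure) \<Rightarrow> ('a \<Rightarrow> nat \<Rightarrow> real) \<Rightarrow> nat \<Rightarrow> real measure" where
  "model_distr P f s = distr (P s) borel (\<lambda>x. f x s)"

definition DeltaMDP :: "(nat \<Rightarrow> 'a measure) \<Rightarrow> ('a \<Rightarrow> nat \<Rightarrow> real) \<Rightarrow> nat \<Rightarrow> ('a \<Rightarrow> 'a) \<Rightarrow> real" where
  "DeltaMDP P f s T = (\<integral>x. \<bar>f x s - f (T x) (1 - s)\<bar> \<partial>(P s))"

definition DeltaWDP :: "(nat \<Rightarrow> 'a measure) \<Rightarrow> ('a \<Rightarrow> nat \<Rightarrow> real) \<Rightarrow> ennreal" where
  "DeltaWDP P f = wasserstein1 (model_distr P f 0) (model_distr P f 1)"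

definition DeltaDPbar :: "(nat \<Rightarrow> 'a measure) \<Rightarrow> ('a \<Rightarrow> nat \<Rightarrow> real) \<Rightarrow> real" where
  "DeltaDPbar P f = \<bar>(\<integral>x. f x 0 \<partial>(P 0)) - (\<integral>x. f x 1 \<partial>(P 1))\<bar>"

end

theory Submission
  imports Defs
begin

text \<open>Pushing \<open>P\<^sub>s\<close> forward along \<open>x \<mapsto> (f(x,s), f(T\<^sub>s x, s'))\<close> gives a coupling of the two
  model distributions, since \<open>T\<^sub>s\<close> carries \<open>P\<^sub>s\<close> to \<open>P\<^sub>s\<^sub>'\<close>; its transport cost is exactly
  \<open>\<Delta>MDP(f, T\<^sub>s)\<close>, which therefore bounds the Wasserstein distance. The mean gap is bounded
  by the same integral through \<open>|\<integral>g| \<le> \<integral>|g|\<close>.\<close>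

lemma borel_measurable_real_pair_maps:
  "fst \<in> (borel :: (real \<times> real) measure) \<rightarrow>\<^sub>M borel"
  "snd \<in> (borel :: (real \<times> real) measure) \<rightarrow>\<^sub>M borel"
  "prod.swap \<in> (borel :: (real \<times> real) measure) \<rightarrow>\<^sub>M borel"
  "(\<lambda>z. \<bar>fst z - snd z\<bar>) \<in> (borel :: (real \<times> real) measure) \<rightarrow>\<^sub>M borel"
  by (intro borel_measurable_continuous_onI continuous_intros)+

lemma couplings_swap:
  assumes "\<gamma> \<in> couplings Q1 Q2"
  shows "distr \<gamma> borel prod.swap \<in> couplings Q2 Q1"
  unfolding couplings_def
proof (intro CollectI conjI)
  have "sets \<gamma> = sets borel"
    using assms by (simp add: couplings_def)
  then have swap_meas: "prod.swap \<in> \<gamma> \<rightarrow>\<^sub>M borel"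
    using borel_measurable_real_pair_maps(3) by (subst measurable_cong_sets) auto
  show "sets (distr \<gamma> borel prod.swap) = sets borel"
    by simp
  show "prob_space (distr \<gamma> borel prod.swap)"
    using assms swap_meas by (simp add: couplings_def prob_space.prob_space_distr)
  show "distr (distr \<gamma> borel prod.swap) borel fst = Q2"
    using assms swap_meas borel_measurable_real_pair_maps(1)
    by (subst distr_distr) (auto simp: couplings_def comp_def)
  show "distr (distr \<gamma> borel prod.swap) borel snd = Q1"
    using assms swap_meas borel_measurable_real_pair_maps(2)
    by (subst distr_distr) (auto simp: couplings_def comp_def)
qed

lemma wasserstein1_le_swap: "wasserstein1 Q2 Q1 \<le> wasserstein1 Q1 Q2"
  unfolding wasserstein1_def
proof (rule INF_greatest)
  fix \<gamma> assume \<gamma>: "\<gamma> \<in> couplings Q1 Q2"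
  have "sets \<gamma> = sets borel"
    using \<gamma> by (simp add: couplings_def)
  then have swap_meas: "prod.swap \<in> \<gamma> \<rightarrow>\<^sub>M borel"
    using borel_measurable_real_pair_maps(3) by (subst measurable_cong_sets) auto
  have "(INF \<gamma>'\<in>couplings Q2 Q1. \<integral>\<^sup>+ z. ennreal \<bar>fst z - snd z\<bar> \<partial>\<gamma>')
      \<le> (\<integral>\<^sup>+ z. ennreal \<bar>fst z - snd z\<bar> \<partial>distr \<gamma> borel prod.swap)"
    by (rule INF_lower) (rule couplings_swap[OF \<gamma>])
  also have "\<dots> = (\<integral>\<^sup>+ z. ennreal \<bar>fst z - snd z\<bar> \<partial>\<gamma>)"
    using swap_meas borel_measurable_real_pair_maps(4)
    by (subst nn_integral_distr) (auto simp: abs_minus_commute)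
  finally show "(INF \<gamma>'\<in>couplings Q2 Q1. \<integral>\<^sup>+ z. ennreal \<bar>fst z - snd z\<bar> \<partial>\<gamma>')
      \<le> (\<integral>\<^sup>+ z. ennreal \<bar>fst z - snd z\<bar> \<partial>\<gamma>)" .
qed

lemma wasserstein1_commute: "wasserstein1 Q1 Q2 = wasserstein1 Q2 Q1"
  by (intro antisym wasserstein1_le_swap)

lemma wasserstein1_distr_le:
  fixes h0 h1 :: "'a \<Rightarrow> real"
  assumes "prob_space M" "h0 \<in> borel_measurable M" "h1 \<in> borel_measurable M"
  shows "wasserstein1 (distr M borel h0) (distr M borel h1) \<le> (\<integral>\<^sup>+ x. ennreal \<bar>h0 x - h1 x\<bar> \<partial>M)"
proof -
  have pair_meas: "(\<lambda>x. (h0 x, h1 x)) \<in> M \<rightarrow>\<^sub>M (borel :: (real \<times> real) measure)"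
    using assms(2,3) by measurable
  let ?\<gamma> = "distr M borel (\<lambda>x. (h0 x, h1 x))"
  have "?\<gamma> \<in> couplings (distr M borel h0) (distr M borel h1)"
    unfolding couplings_def
  proof (intro CollectI conjI)
    show "sets ?\<gamma> = sets borel"
      by simp
    show "prob_space ?\<gamma>"
      using assms(1) pair_meas by (simp add: prob_space.prob_space_distr)
    show "distr ?\<gamma> borel fst = distr M borel h0"
      using pair_meas borel_measurable_real_pair_maps(1) by (subst distr_distr) (auto simp: comp_def)
    show "distr ?\<gamma> borel snd = distr M borel h1"
      using pair_meas borel_measurable_real_pair_maps(2) by (subst distr_distr) (auto simp: comp_def)
  qed
  then have "wasserstein1 (distr M borel h0) (distr M borel h1)
      \<le> (\<integral>\<^sup>+ z. ennreal \<bar>fst z - snd z\<bar> \<partial>?\<gamma>)"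
    unfolding wasserstein1_def by (rule INF_lower)
  also have "\<dots> = (\<integral>\<^sup>+ x. ennreal \<bar>h0 x - h1 x\<bar> \<partial>M)"
    using pair_meas borel_measurable_real_pair_maps(4) by (subst nn_integral_distr) auto
  finally show ?thesis .
qed

context
  fixes M :: "'a measure" and N :: "'b measure" and T :: "'a \<Rightarrow> 'b"
    and u :: "'a \<Rightarrow> real" and v :: "'b \<Rightarrow> real"
  assumes T_meas: "T \<in> M \<rightarrow>\<^sub>M N"
    and u_int: "integrable M u"
    and v_int: "integrable (distr M N T) v"
begin

private lemma v_meas: "v \<in> borel_measurable N"
  using borel_measurable_integrable[OF v_int] by simp

private lemma v_comp_int: "integrable M (\<lambda>x. v (T x))"
  using v_int by (simp add: integrable_distr_eq[OF T_meas v_meas])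

lemma wasserstein1_distr_le_transport_cost:
  assumes "prob_space M"
  shows "wasserstein1 (distr M borel u) (distr (distr M N T) borel v)
           \<le> ennreal (\<integral>x. \<bar>u x - v (T x)\<bar> \<partial>M)"
proof -
  have "distr (distr M N T) borel v = distr M borel (\<lambda>x. v (T x))"
    using T_meas v_meas by (simp add: distr_distr comp_def)
  then have "wasserstein1 (distr M borel u) (distr (distr M N T) borel v)
      \<le> (\<integral>\<^sup>+ x. ennreal \<bar>u x - v (T x)\<bar> \<partial>M)"
    using wasserstein1_distr_le[OF assms borel_measurable_integrable[OF u_int]
        borel_measurable_integrable[OF v_comp_int]]
    by (simp only:)
  also have "\<dots> = ennreal (\<integral>x. \<bar>u x - v (T x)\<bar> \<partial>M)"
    using u_int v_comp_int by (intro nn_integral_eq_integral) auto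
  finally show ?thesis .
qed

lemma abs_integral_diff_le_transport_cost:
  "\<bar>(\<integral>x. u x \<partial>M) - (\<integral>y. v y \<partial>distr M N T)\<bar> \<le> (\<integral>x. \<bar>u x - v (T x)\<bar> \<partial>M)"
proof -
  have "(\<integral>y. v y \<partial>distr M N T) = (\<integral>x. v (T x) \<partial>M)"
    using T_meas v_meas by (rule integral_distr)
  then have "\<bar>(\<integral>x. u x \<partial>M) - (\<integral>y. v y \<partial>distr M N T)\<bar> = \<bar>\<integral>x. u x - v (T x) \<partial>M\<bar>"
    using u_int v_comp_int by simp
  also have "\<dots> \<le> (\<integral>x. \<bar>u x - v (T x)\<bar> \<partial>M)"
    by (rule integral_abs_bound)
  finally show ?thesis .
qed

end

lemma DeltaWDP_eq:
  assumes "s \<in> {0, 1}"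
  shows "DeltaWDP P f = wasserstein1 (model_distr P f s) (model_distr P f (1 - s))"
  using assms by (auto simp: DeltaWDP_def wasserstein1_commute[of "model_distr P f 0"])

lemma DeltaDPbar_eq:
  assumes "s \<in> {0, 1}"
  shows "DeltaDPbar P f = \<bar>(\<integral>x. f x s \<partial>P s) - (\<integral>x. f x (1 - s) \<partial>P (1 - s))\<bar>"
  using assms by (auto simp: DeltaDPbar_def abs_minus_commute)

lemma integrable_bounded_on_prob_1_set:
  fixes g :: "'a \<Rightarrow> real"
  assumes "prob_space M" "g \<in> borel_measurable M" "measure M X = 1"
    and "\<And>x. x \<in> X \<Longrightarrow> \<bar>g x\<bar> \<le> B"
  shows "integrable M g"
proof -
  interpret prob_space M by (rule assms(1))
  have "AE x in M. x \<in> X"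
    using assms(3) by (rule AE_prob_1)
  then have "AE x in M. norm (g x) \<le> B"
    by eventually_elim (use assms(4) in auto)
  then show ?thesis
    using assms(2) by (rule integrable_const_bound)
qed

theorem mainTheorem5:
  fixes P :: "nat \<Rightarrow> ('a::euclidean_space) measure"
    and X :: "'a set"
    and f :: "'a \<Rightarrow> nat \<Rightarrow> real"
    and T :: "'a \<Rightarrow> 'a"
    and s :: nat and \<delta> :: real
  assumes X_borel: "X \<in> sets borel"
    and P_prob: "\<And>r. r \<in> {0, 1} \<Longrightarrow> prob_space (P r)"
    and P_sets: "\<And>r. r \<in> {0, 1} \<Longrightarrow> sets (P r) = sets borel"
    and P_ac: "\<And>r. r \<in> {0, 1} \<Longrightarrow> absolutely_continuous lborel (P r)"
    and P_X: "\<And>r. r \<in> {0, 1} \<Longrightarrow> measure (P r) X = 1"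
    and f_meas: "\<And>r. r \<in> {0, 1} \<Longrightarrow> (\<lambda>x. f x r) \<in> borel_measurable borel"
    and f_range: "\<And>x r. x \<in> X \<Longrightarrow> r \<in> {0, 1} \<Longrightarrow> f x r \<in> {0..1}"
    and s01: "s \<in> {0, 1}"
    and T_meas: "T \<in> borel_measurable borel"
    and T_push: "distr (P s) borel T = P (1 - s)"
    and delta_nonneg: "\<delta> \<ge> 0"
    and MDP: "DeltaMDP P f s T \<le> \<delta>"
  shows "DeltaWDP P f \<le> ennreal \<delta> \<and> DeltaDPbar P f \<le> \<delta>"
proof -
  have f_int: "integrable (P r) (\<lambda>x. f x r)" if "r \<in> {0, 1}" for r
  proof (rule integrable_bounded_on_prob_1_set[where X = X and B = 1])
    show "(\<lambda>x. f x r) \<in> borel_measurable (P r)"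
      using f_meas[OF that] by (subst measurable_cong_sets[OF P_sets[OF that] refl])
  qed (use P_prob P_X f_range that in auto)
  have s'01: "1 - s \<in> {0, 1}"
    using s01 by auto
  have T_meas': "T \<in> P s \<rightarrow>\<^sub>M borel"
    using T_meas by (subst measurable_cong_sets[OF P_sets[OF s01] refl])
  note transport = T_meas' f_int[OF s01] f_int[OF s'01, folded T_push]
  have "DeltaWDP P f \<le> ennreal (DeltaMDP P f s T)"
    using wasserstein1_distr_le_transport_cost[OF transport P_prob[OF s01]]
    unfolding DeltaWDP_eq[OF s01] model_distr_def DeltaMDP_def T_push .
  also have "\<dots> \<le> ennreal \<delta>"
    using MDP by (rule ennreal_leI)
  finally have "DeltaWDP P f \<le> ennreal \<delta>" .
  moreover have "DeltaDPbar P f \<le> DeltaMDP P f s T"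
    using abs_integral_diff_le_transport_cost[OF transport]
    unfolding DeltaDPbar_eq[OF s01] DeltaMDP_def T_push .
  then have "DeltaDPbar P f \<le> \<delta>"
    using MDP by (rule order_trans)
  ultimately show ?thesis ..
qed

end
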